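(* There exists an absolute constant $C>0$ such that the following holds. Let $B$ be a finite set of consecutive integers, let $1\le m\le|B|$ and let $I=(i_1,\dots,i_m)\subseteq B$ be an increasing sequence of integers. For an integer $s\ge1$ define $$\mathcal{J}'_{s,I}=\Big\{(j_1,\dots,j_m)\in\mathbb{Z}^m: \sum_{k=1}^m j_k=s,\ j_k\ge 0\text{ for all }k,\ j_{k+1}-j_k\le i_{k+1}-i_k\text{ for all }1\le k\le m-1\Big\}.$$ Then $$|\mathcal{J}'_{s,I}|\le\left(\frac{C}{m^2}\right)^{m-1}\left(s^{m-1}+(m|B|)^{m-1}\right).$$ *)

theory Defs
  imports Complex_Main
begin

definition Jprime :: "int \<Rightarrow> int list \<Rightarrow> int list set" where
  "Jprime s I = {js. length js = length I \<and> sum_list js = s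
      \<and> (\<forall>k < length I. js ! k \<ge> 0)
      \<and> (\<forall>k. k + 1 < length I \<longrightarrow> js ! (k+1) - js ! k \<le> I ! (k+1) - I ! k)}"

end

theory Submission
  imports Defs "HOL-Combinatorics.Multiset_Permutations"
begin

(*
  Shifting j_k by b - i_k + (m - 1 - k), where b = max B, turns the constraint
  j_{k+1} - j_k \<le> i_{k+1} - i_k into strict decrease, so J'_{s,I} injects into the m-element
  sets of naturals with a sum T satisfying T + m - 1 \<le> s + 2m|B|. The m! orderings of such a
  set are compositions of T into m parts, so there are at most
  C(T+m-1, m-1) / m! \<le> (T+m-1)^(m-1) / (m! (m-1)!) sets; finally
  m^(2(m-1)) \<le> 9^(m-1) m! (m-1)! turns the factorials into the factor (C/m^2)^(m-1).
*)

lemma finite_nat_sets_with_sum: "finite {A::nat set. finite A \<and> \<Sum>A = T}"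
proof (rule finite_subset)
  show "{A::nat set. finite A \<and> \<Sum>A = T} \<subseteq> Pow {..T}"
    using member_le_sum[where f = id] by fastforce
qed simp

lemma card_nat_sets_with_sum_mult_fact_le:
  "card {A::nat set. finite A \<and> card A = m \<and> \<Sum>A = T} * fact m \<le> (T + m - 1) choose T"
proof -
  define S where "S = {A::nat set. finite A \<and> card A = m \<and> \<Sum>A = T}"
  define L where "L = {l::nat list. length l = m \<and> sum_list l = T}"
  have "L \<subseteq> {l. set l \<subseteq> {..T} \<and> length l = m}"
    unfolding L_def using member_le_sum_list by fastforce
  then have finite_L: "finite L"
    using finite_lists_length_eq[of "{..T}" m] finite_subset by blast
  have finite_S: "finite S"
    unfolding S_def by (rule finite_subset[OF _ finite_nat_sets_with_sum[of T]]) auto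
  have perms_in_L: "permutations_of_set A \<subseteq> L" if "A \<in> S" for A
  proof
    fix xs assume "xs \<in> permutations_of_set A"
    then have "set xs = A" "distinct xs" "length xs = card A"
      by (auto dest: permutations_of_setD length_finite_permutations_of_set)
    then show "xs \<in> L"
      using that unfolding S_def L_def by (auto simp: distinct_sum_list_conv_Sum)
  qed
  have "card S * fact m = (\<Sum>A\<in>S. card (permutations_of_set A))"
    by (simp add: S_def)
  also have "\<dots> = card (\<Union>A\<in>S. permutations_of_set A)"
    using finite_S by (intro card_UN_disjoint[symmetric]) (auto dest: permutations_of_setD)
  also have "\<dots> \<le> card L"
    using perms_in_L finite_L by (intro card_mono) auto
  also have "\<dots> = (T + m - 1) choose T"
    unfolding L_def by (rule card_length_sum_list)
  finally show ?thesis
    unfolding S_def .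
qed

lemma sorted_wrt_greater_set_unique:
  fixes xs ys :: "'a::linorder list"
  assumes "sorted_wrt (>) xs" "sorted_wrt (>) ys" "set xs = set ys"
  shows "xs = ys"
proof -
  have "sorted_wrt (<) (rev xs)" "sorted_wrt (<) (rev ys)"
    using assms(1,2) by (simp_all add: sorted_wrt_rev)
  then have "rev xs = rev ys"
    using assms(3) sorted_distinct_set_unique by (metis set_rev strict_sorted_iff)
  then show ?thesis
    by simp
qed

lemma Jprime_diff_antimono:
  assumes "js \<in> Jprime s I" "i \<le> j" "j < length I"
  shows "js ! j - I ! j \<le> js ! i - I ! i"
  using assms(2,3)
proof (induction j rule: dec_induct)
  case base
  then show ?case by simp
next
  case (step n)
  then have "js ! Suc n - js ! n \<le> I ! Suc n - I ! n"
    using assms(1) unfolding Jprime_def by auto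
  with step show ?case by simp
qed

lemma card_Jprime_le_card_sets:
  assumes "length I = m" "set I \<subseteq> {..b}"
  shows "card (Jprime s I) \<le>
    card {A::nat set. finite A \<and> card A = m \<and> \<Sum>A = nat (s + (\<Sum>k<m. b - I ! k + int (m - 1 - k)))}"
    (is "_ \<le> card ?S")
proof -
  \<comment> \<open>Since \<open>js ! k - I ! k\<close> is nonincreasing, the shifted entries strictly decrease.\<close>
  define g where "g js k = js ! k + (b - I ! k) + int (m - 1 - k)" for js :: "int list" and k
  define w where "w js = map (\<lambda>k. nat (g js k)) [0..<m]" for js
  have g_nonneg: "0 \<le> g js k" if "js \<in> Jprime s I" "k < m" for js k
    using that assms nth_mem unfolding Jprime_def g_def by fastforce
  have w_decreasing: "sorted_wrt (>) (w js)" if js: "js \<in> Jprime s I" for js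
    unfolding sorted_wrt_iff_nth_less
  proof (intro allI impI)
    fix i j assume ij: "i < j" "j < length (w js)"
    then have "g js j < g js i"
      using Jprime_diff_antimono[OF js, of i j] assms(1) unfolding g_def w_def by simp
    then show "w js ! j < w js ! i"
      using ij g_nonneg[OF js, of j] by (simp add: w_def)
  qed
  have w_in_S: "set (w js) \<in> ?S" if js: "js \<in> Jprime s I" for js
  proof -
    have distinct: "distinct (w js)"
      using w_decreasing[OF js] by (metis distinct_rev sorted_wrt_rev strict_sorted_iff)
    have "(\<Sum>k<m. js ! k) = s"
      using js assms(1) unfolding Jprime_def by (auto simp: sum_list_sum_nth atLeast0LessThan)
    moreover have "int (sum_list (w js)) = (\<Sum>k<m. g js k)"
      using g_nonneg[OF js] by (simp add: w_def sum_list_sum_nth atLeast0LessThan)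
    ultimately have "int (sum_list (w js)) = s + (\<Sum>k<m. b - I ! k + int (m - 1 - k))"
      unfolding g_def by (simp only: sum.distrib add.assoc)
    then have "\<Sum>(set (w js)) = nat (s + (\<Sum>k<m. b - I ! k + int (m - 1 - k)))"
      using distinct by (simp add: distinct_sum_list_conv_Sum[symmetric] flip: nat_int)
    moreover have "card (set (w js)) = m"
      using distinct distinct_card[of "w js"] by (simp add: w_def)
    ultimately show ?thesis
      by simp
  qed
  have inj: "inj_on (\<lambda>js. set (w js)) (Jprime s I)"
  proof (rule inj_onI)
    fix x y assume x: "x \<in> Jprime s I" and y: "y \<in> Jprime s I" and "set (w x) = set (w y)"
    then have "w x = w y"
      using sorted_wrt_greater_set_unique[OF w_decreasing[OF x] w_decreasing[OF y]] by simp
    have "g x k = g y k" if "k < m" for k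
    proof -
      have "w x ! k = w y ! k"
        using \<open>w x = w y\<close> by simp
      then have "nat (g x k) = nat (g y k)"
        using that by (simp add: w_def)
      then show ?thesis
        using g_nonneg[OF x that] g_nonneg[OF y that] by simp
    qed
    then show "x = y"
      using x y assms(1) unfolding Jprime_def g_def by (auto intro: nth_equalityI)
  qed
  have "finite ?S"
    by (rule finite_subset[OF _ finite_nat_sets_with_sum[of "nat (s + (\<Sum>k<m. b - I ! k + int (m - 1 - k)))"]])
      auto
  then show ?thesis
    using card_inj_on_le[OF inj] w_in_S by blast
qed

lemma Suc_power_le_three_power_fact: "(real n + 1) ^ n \<le> 3 ^ n * fact n"
proof (induction n)
  case 0
  then show ?case by simp
next
  case (Suc n)
  have "1 + 1 / (real n + 1) = (real n + 2) / (real n + 1)"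
    by (simp add: field_simps)
  then have "((real n + 2) / (real n + 1)) ^ (n + 1) \<le> exp 1"
    using exp_ge_one_plus_x_over_n_power_n[of "n + 1" 1] by (simp add: add.commute)
  also have "\<dots> \<le> 3"
    by (rule exp_le)
  finally have "(real n + 2) ^ (n + 1) \<le> 3 * (real n + 1) ^ (n + 1)"
    by (simp add: power_divide pos_divide_le_eq)
  then have "(real (Suc n) + 1) ^ Suc n \<le> 3 * (real n + 1) ^ (n + 1)"
    by (simp add: add.commute)
  also have "\<dots> = 3 * (real n + 1) * (real n + 1) ^ n"
    by simp
  also have "\<dots> \<le> 3 * (real n + 1) * (3 ^ n * fact n)"
    using Suc.IH by (intro mult_left_mono) auto
  also have "\<dots> = 3 ^ Suc n * fact (Suc n)"
    by (simp add: mult_ac)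
  finally show ?case .
qed

lemma square_power_le_fact_fact: "(real (Suc n) ^ 2) ^ n \<le> 9 ^ n * (fact (Suc n) * fact n)"
proof -
  have small: "real (Suc n) ^ n \<le> 3 ^ n * fact n"
    using Suc_power_le_three_power_fact[of n] by (simp add: add.commute)
  also have "\<dots> \<le> 3 ^ n * fact (Suc n)"
    by (intro mult_left_mono fact_mono) auto
  finally have large: "real (Suc n) ^ n \<le> 3 ^ n * fact (Suc n)" .
  have "(real (Suc n) ^ 2) ^ n = real (Suc n) ^ n * real (Suc n) ^ n"
    by (simp add: power2_eq_square power_mult_distrib)
  also have "\<dots> \<le> (3 ^ n * fact (Suc n)) * (3 ^ n * fact n)"
    using small large by (intro mult_mono) auto
  also have "\<dots> = 9 ^ n * (fact (Suc n) * fact n)"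
    by (simp add: power_mult_distrib[symmetric])
  finally show ?thesis .
qed

lemma power_add_le_two_power:
  fixes x y :: "'a::linordered_idom"
  assumes "0 \<le> x" "0 \<le> y"
  shows "(x + y) ^ n \<le> 2 ^ n * (x ^ n + y ^ n)"
proof -
  have "(x + y) ^ n \<le> (2 * max x y) ^ n"
    using assms by (intro power_mono) auto
  also have "\<dots> = 2 ^ n * max x y ^ n"
    by (rule power_mult_distrib)
  also have "max x y ^ n \<le> x ^ n + y ^ n"
    using assms by (cases "x \<le> y") (auto simp: max_def)
  finally show ?thesis
    by simp
qed

lemma fact_fact_bound_imp_le:
  fixes c x y :: real
  assumes "0 \<le> x" "0 \<le> y" and bound: "c * fact (Suc n) * fact n \<le> (x + 2 * y) ^ n"
  shows "c \<le> (36 / real (Suc n) ^ 2) ^ n * (x ^ n + y ^ n)"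
proof -
  have "(x + 2 * y) ^ n \<le> (2 * (x + y)) ^ n"
    using assms(1,2) by (intro power_mono) auto
  also have "\<dots> = 2 ^ n * (x + y) ^ n"
    by (rule power_mult_distrib)
  also have "\<dots> \<le> 2 ^ n * (2 ^ n * (x ^ n + y ^ n))"
    using power_add_le_two_power[OF assms(1,2)] by (rule mult_left_mono) simp
  also have "\<dots> = 4 ^ n * (x ^ n + y ^ n)"
    by (simp add: mult.assoc[symmetric] flip: power_mult_distrib)
  finally have c_fact: "c * (fact (Suc n) * fact n) \<le> 4 ^ n * (x ^ n + y ^ n)"
    using order_trans[OF bound] by (simp only: mult.assoc)
  have "c * (real (Suc n) ^ 2) ^ n \<le> 36 ^ n * (x ^ n + y ^ n)"
  proof (cases "c \<le> 0")
    case True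
    then have "c * (real (Suc n) ^ 2) ^ n \<le> 0"
      by (intro mult_nonpos_nonneg) auto
    also have "0 \<le> 36 ^ n * (x ^ n + y ^ n)"
      using assms(1,2) by (intro mult_nonneg_nonneg add_nonneg_nonneg zero_le_power) auto
    finally show ?thesis .
  next
    case False
    then have "c * (real (Suc n) ^ 2) ^ n \<le> c * (9 ^ n * (fact (Suc n) * fact n))"
      using square_power_le_fact_fact by (intro mult_left_mono) auto
    also have "\<dots> \<le> 9 ^ n * (4 ^ n * (x ^ n + y ^ n))"
      using c_fact by (simp only: mult.left_commute[of c] mult_left_mono zero_le_power zero_le_numeral)
    also have "\<dots> = 36 ^ n * (x ^ n + y ^ n)"
      by (simp flip: power_mult_distrib)
    finally show ?thesis .
  qed
  then have "c \<le> 36 ^ n * (x ^ n + y ^ n) / (real (Suc n) ^ 2) ^ n"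
    by (simp add: pos_le_divide_eq del: of_nat_Suc)
  then show ?thesis
    by (simp add: power_divide)
qed

lemma card_Jprime_fact_fact_le:
  assumes "length I = m" "1 \<le> m" "m \<le> card {a..b}" "set I \<subseteq> {a..b}" "0 \<le> s"
  shows "card (Jprime s I) * fact m * fact (m - 1) \<le> (nat s + 2 * m * card {a..b}) ^ (m - 1)"
proof -
  define N where "N = card {a..b}"
  define Sg where "Sg = (\<Sum>k<m. b - I ! k + int (m - 1 - k))"
  define T where "T = nat (s + Sg)"
  have I_bounds: "a \<le> I ! k \<and> I ! k \<le> b" if "k < m" for k
    using assms(1,4) that nth_mem by fastforce
  have N: "int N = b - a + 1" "int m \<le> int N"
    using assms(2,3) by (auto simp: N_def)
  have Sg_nonneg: "0 \<le> Sg"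
    unfolding Sg_def using I_bounds by (intro sum_nonneg) fastforce
  have "Sg \<le> (\<Sum>k<m. 2 * (int N - 1))"
    unfolding Sg_def using I_bounds N by (intro sum_mono) fastforce
  then have "Sg \<le> 2 * (int m * int N) - 2 * int m"
    by (simp add: algebra_simps)
  then have "int (T + (m - 1)) \<le> int (nat s + 2 * m * N)"
    using Sg_nonneg assms(2,5) by (simp add: T_def of_nat_diff)
  then have T_bound: "T + (m - 1) \<le> nat s + 2 * m * N"
    by (simp only: of_nat_le_iff)
  have "card (Jprime s I) * fact m \<le> card {A::nat set. finite A \<and> card A = m \<and> \<Sum>A = T} * fact m"
    using card_Jprime_le_card_sets[OF assms(1), of b s] assms(4) unfolding T_def Sg_def
    by (simp add: subset_eq)
  also have "\<dots> \<le> (T + (m - 1)) choose (m - 1)"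
    using card_nat_sets_with_sum_mult_fact_le[of m T] binomial_symmetric[of "m - 1" "T + (m - 1)"] assms(2)
    by simp
  finally have "card (Jprime s I) * fact m * fact (m - 1) \<le> ((T + (m - 1)) choose (m - 1)) * fact (m - 1)"
    by (rule mult_right_mono) simp
  also have "\<dots> \<le> (T + (m - 1)) ^ (m - 1)"
    by (rule binomial_fact_pow)
  also have "\<dots> \<le> (nat s + 2 * m * N) ^ (m - 1)"
    using T_bound by (rule power_mono) simp
  finally show ?thesis
    unfolding N_def .
qed

theorem lemma4p7:
  shows "\<exists>C::real. C > 0 \<and>
    (\<forall>(a::int) (b::int) (m::nat) (I::int list) (s::int).
       a \<le> b \<longrightarrow> 1 \<le> m \<longrightarrow> m \<le> card {a..b} \<longrightarrow>
       length I = m \<longrightarrow> sorted_wrt (<) I \<longrightarrow> set I \<subseteq> {a..b} \<longrightarrow> s \<ge> 1 \<longrightarrow>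
       real (card (Jprime s I)) \<le>
         (C / real m ^ 2) ^ (m - 1) *
         (real_of_int s ^ (m - 1) + (real m * real (card {a..b})) ^ (m - 1)))"
proof (intro exI[of _ 36] conjI allI impI)
  fix a b :: int and m :: nat and I :: "int list" and s :: int
  assume "1 \<le> m" "m \<le> card {a..b}" "length I = m" "set I \<subseteq> {a..b}" "s \<ge> 1"
  from \<open>1 \<le> m\<close> obtain n where m: "m = Suc n"
    by (cases m) auto
  have "card (Jprime s I) * fact m * fact (m - 1) \<le> (nat s + 2 * m * card {a..b}) ^ (m - 1)"
    using card_Jprime_fact_fact_le \<open>1 \<le> m\<close> \<open>m \<le> card {a..b}\<close> \<open>length I = m\<close>
      \<open>set I \<subseteq> {a..b}\<close> \<open>s \<ge> 1\<close> by simp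
  then have "real (card (Jprime s I) * fact m * fact (m - 1))
      \<le> real ((nat s + 2 * m * card {a..b}) ^ (m - 1))"
    by (rule of_nat_mono)
  moreover have "real (card (Jprime s I) * fact m * fact (m - 1))
      = real (card (Jprime s I)) * fact (Suc n) * fact n"
    by (simp add: m del: fact_Suc)
  moreover have "real ((nat s + 2 * m * card {a..b}) ^ (m - 1))
      = (real_of_int s + 2 * (real m * real (card {a..b}))) ^ n"
    using \<open>s \<ge> 1\<close> by (simp add: m algebra_simps)
  ultimately have "real (card (Jprime s I)) * fact (Suc n) * fact n
      \<le> (real_of_int s + 2 * (real m * real (card {a..b}))) ^ n"
    by linarith
  with \<open>s \<ge> 1\<close> have "real (card (Jprime s I)) \<le> (36 / real (Suc n) ^ 2) ^ n *
      (real_of_int s ^ n + (real m * real (card {a..b})) ^ n)"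
    by (intro fact_fact_bound_imp_le) simp_all
  then show "real (card (Jprime s I)) \<le> (36 / real m ^ 2) ^ (m - 1) *
      (real_of_int s ^ (m - 1) + (real m * real (card {a..b})) ^ (m - 1))"
    unfolding m by simp
qed simp

end
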